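(* Let $[X,d,m]$ be a metric random walk space with invariant probability measure $\nu$. Then $[X,d,m]$ with $\nu$ is $m$-connected if and only if $\nu$ is ergodic.
   Context: A metric random walk space $[X,d,m]$ is a Polish metric space $(X,d)$ with a family $m=(m_x)_{x\in X}$ of Borel probability measures, $x\mapsto m_x(A)$ Borel measurable, each with finite first moment. A Radon measure $\nu$ is invariant if $\nu(A)=\int_X m_x(A)d\nu(x)$ for all $\nu$-measurable $A$. Iterates $m_x^{*1}=m_x$, $m_x^{*n}(A)=\int_X m_z(A)dm_x^{*(n-1)}(z)$; $N^m_D=\{x:m_x^{*n}(D)=0\ \forall n\in\mathbb N\}$. The space is $m$-connected if $\nu(N^m_D)=0$ for every $\nu$-measurable $D$ with $0<\nu(D)<\infty$. A Borel set $B$ is invariant for $m$ if $m_x(B)=1$ for every $x\in B$; the invariant probability measure $\nu$ is ergodic if $\nu(B)\in\{0,1\}$ for every invariant set $B$. *)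

theory Defs
  imports "HOL-Probability.Probability"
begin

definition mrw_space :: "('a::polish_space \<Rightarrow> 'a measure) \<Rightarrow> bool" where
  "mrw_space m \<longleftrightarrow>
     (\<forall>x. prob_space (m x) \<and> sets (m x) = sets borel) \<and>
     (\<forall>A \<in> sets borel. (\<lambda>x. emeasure (m x) A) \<in> borel_measurable borel) \<and>
     (\<forall>x. integrable (m x) (\<lambda>y. dist x y))"

text \<open>Iterates: m_iter m k x is m_x^{*(k+1)}; m_x^{*1} = m_x and
  m_x^{*(n+1)}(A) = \<integral> m_z(A) dm_x^{*n}(z), i.e. the bind of m_x^{*n} with the kernel m.\<close>
fun m_iter :: "('a \<Rightarrow> 'a measure) \<Rightarrow> nat \<Rightarrow> 'a \<Rightarrow> 'a measure" where
  "m_iter m 0 x = m x"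
| "m_iter m (Suc k) x = bind (m_iter m k x) m"

definition N_set :: "('a \<Rightarrow> 'a measure) \<Rightarrow> 'a set \<Rightarrow> 'a set" where
  "N_set m D = {x. \<forall>k. emeasure (m_iter m k x) D = 0}"

text \<open>Invariant probability measure nu (Borel; on a Polish space finite Borel
  measures are Radon).\<close>
definition invariant_prob :: "('a::polish_space \<Rightarrow> 'a measure) \<Rightarrow> 'a measure \<Rightarrow> bool" where
  "invariant_prob m \<nu> \<longleftrightarrow> prob_space \<nu> \<and> sets \<nu> = sets borel \<and>
     (\<forall>A \<in> sets borel. emeasure \<nu> A = (\<integral>\<^sup>+ x. emeasure (m x) A \<partial>\<nu>))"

definition m_connected :: "('a::polish_space \<Rightarrow> 'a measure) \<Rightarrow> 'a measure \<Rightarrow> bool" where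
  "m_connected m \<nu> \<longleftrightarrow>
     (\<forall>D \<in> sets borel. 0 < emeasure \<nu> D \<and> emeasure \<nu> D < \<infinity> \<longrightarrow> N_set m D \<in> null_sets \<nu>)"

definition invariant_set :: "('a::polish_space \<Rightarrow> 'a measure) \<Rightarrow> 'a set \<Rightarrow> bool" where
  "invariant_set m B \<longleftrightarrow> B \<in> sets borel \<and> (\<forall>x\<in>B. emeasure (m x) B = 1)"

definition ergodic :: "('a::polish_space \<Rightarrow> 'a measure) \<Rightarrow> 'a measure \<Rightarrow> bool" where
  "ergodic m \<nu> \<longleftrightarrow> (\<forall>B. invariant_set m B \<longrightarrow> emeasure \<nu> B = 0 \<or> emeasure \<nu> B = 1)"

end

theory Submission
  imports Defs
begin

text \<open>For a Borel set D, a point of N_D reaches D in no finite number of steps, so almost every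
  point it jumps to has the same property: N_D is an invariant set. Conversely, an invariant set B
  is contained in N_{X-B}. Invariance of \<nu> gives \<nu>(D) = \<integral> m_x(D) d\<nu>(x) \<le> \<nu>(X - N_D), because
  m_x(D) vanishes on N_D. Hence under ergodicity \<nu>(D) > 0 forces \<nu>(N_D) = 0, and under
  m-connectedness \<nu>(X - B) > 0 forces \<nu>(B) = 0 for every invariant B.\<close>

lemma emeasure_Compl_prob_space:
  assumes "prob_space M" "sets M = sets borel" "A \<in> sets borel"
  shows "emeasure M (- A) = 1 - emeasure M A"
proof -
  interpret prob_space M by fact
  have "space M = UNIV"
    using sets_eq_imp_space_eq[OF assms(2)] by simp
  then show ?thesis
    using emeasure_compl[of A M] assms(2,3) emeasure_space_1 by (simp add: Compl_eq_Diff_UNIV)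
qed

lemma emeasure_Compl_eq_0_iff_prob_space:
  assumes "prob_space M" "sets M = sets borel" "A \<in> sets borel"
  shows "emeasure M (- A) = 0 \<longleftrightarrow> emeasure M A = 1"
  using emeasure_Compl_prob_space[OF assms] prob_space.emeasure_ge_1_iff[OF assms(1), of A]
    ennreal_minus_eq_0[of 1 "emeasure M A"]
  by auto

lemma mrw_space_kernel:
  assumes "mrw_space m"
  shows "m \<in> measurable borel (subprob_algebra borel)"
  using assms unfolding mrw_space_def
  by (intro measurable_subprob_algebra) (auto simp: prob_space_imp_subprob_space)

context
  fixes m :: "'a::topological_space \<Rightarrow> 'a measure"
  assumes kernel: "m \<in> measurable borel (subprob_algebra borel)"
begin

lemma measurable_m_iter: "m_iter m k \<in> measurable borel (subprob_algebra borel)"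
proof (induction k)
  case 0
  then show ?case using kernel by simp
next
  case (Suc k)
  show ?case using measurable_bind2[OF Suc kernel] by simp
qed

lemma sets_m_iter: "sets (m_iter m k x) = sets borel"
  using sets_kernel[OF measurable_m_iter] by simp

lemma space_m_iter: "space (m_iter m k x) = UNIV"
  using sets_eq_imp_space_eq[OF sets_m_iter] by simp

lemma borel_measurable_emeasure_m_iter:
  "A \<in> sets borel \<Longrightarrow> (\<lambda>x. emeasure (m_iter m k x) A) \<in> borel_measurable borel"
  using measurable_emeasure_kernel[OF measurable_m_iter] .

lemma emeasure_m_iter_Suc:
  assumes "A \<in> sets borel"
  shows "emeasure (m_iter m (Suc k) x) A = (\<integral>\<^sup>+ z. emeasure (m z) A \<partial>m_iter m k x)"
proof -
  have "m \<in> measurable (m_iter m k x) (subprob_algebra borel)"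
    using kernel by (simp add: measurable_cong_sets[OF sets_m_iter refl])
  then show ?thesis
    by (simp add: emeasure_bind[OF _ _ assms] space_m_iter)
qed

lemma m_iter_Suc_first_step: "m_iter m (Suc k) x = m x \<bind> m_iter m k"
proof (induction k)
  case 0
  then show ?case by simp
next
  case (Suc k)
  have iter: "m_iter m k \<in> measurable (m x) (subprob_algebra borel)"
    using measurable_m_iter by (simp add: measurable_cong_sets[OF sets_kernel[OF kernel] refl])
  have "m_iter m (Suc (Suc k)) x = (m x \<bind> m_iter m k) \<bind> m"
    using Suc by simp
  also have "\<dots> = m x \<bind> (\<lambda>z. m_iter m k z \<bind> m)"
    using bind_assoc[OF iter kernel] .
  finally show ?case by simp
qed

lemma emeasure_m_iter_Suc_first_step:
  assumes "A \<in> sets borel"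
  shows "emeasure (m_iter m (Suc k) x) A = (\<integral>\<^sup>+ z. emeasure (m_iter m k z) A \<partial>m x)"
proof -
  have "space (m x) \<noteq> {}"
    using subprob_measurableD(1)[OF kernel] by simp
  moreover have "m_iter m k \<in> measurable (m x) (subprob_algebra borel)"
    using measurable_m_iter by (simp add: measurable_cong_sets[OF sets_kernel[OF kernel] refl])
  ultimately show ?thesis
    unfolding m_iter_Suc_first_step by (rule emeasure_bind[OF _ _ assms])
qed

lemma N_set_borel: "D \<in> sets borel \<Longrightarrow> N_set m D \<in> sets borel"
proof -
  assume [measurable]: "D \<in> sets borel"
  have "N_set m D = (\<Inter>k. {x\<in>space borel. emeasure (m_iter m k x) D = 0})"
    unfolding N_set_def by auto
  also have "\<dots> \<in> sets borel"
    using borel_measurable_emeasure_m_iter by measurable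
  finally show ?thesis .
qed

lemma subset_N_set_compl:
  assumes B: "B \<in> sets borel" and closed: "\<And>x. x \<in> B \<Longrightarrow> emeasure (m x) (- B) = 0"
  shows "B \<subseteq> N_set m (- B)"
proof
  fix x assume "x \<in> B"
  have "emeasure (m_iter m k x) (- B) = 0" for k
  proof (induction k)
    case 0
    then show ?case using closed[OF \<open>x \<in> B\<close>] by simp
  next
    case (Suc k)
    have "AE z in m_iter m k x. z \<in> B"
      using Suc B AE_iff_measurable[of "- B" "m_iter m k x" "\<lambda>z. z \<in> B"]
      by (auto simp: sets_m_iter space_m_iter)
    then have "(\<integral>\<^sup>+ z. emeasure (m z) (- B) \<partial>m_iter m k x) = (\<integral>\<^sup>+ z. 0 \<partial>m_iter m k x)"
      by (rule nn_integral_cong_AE[OF AE_mp]) (simp add: closed)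
    then show ?case
      using emeasure_m_iter_Suc[of "- B" k x] B by simp
  qed
  then show "x \<in> N_set m (- B)"
    unfolding N_set_def by simp
qed

lemma emeasure_compl_N_set:
  assumes D: "D \<in> sets borel" and x: "x \<in> N_set m D"
  shows "emeasure (m x) (- N_set m D) = 0"
proof -
  have "AE z in m x. emeasure (m_iter m k z) D = 0" for k
  proof -
    have "emeasure (m_iter m (Suc k) x) D = 0"
      using x unfolding N_set_def by blast
    then have "(\<integral>\<^sup>+ z. emeasure (m_iter m k z) D \<partial>m x) = 0"
      by (simp only: emeasure_m_iter_Suc_first_step[OF D])
    then show ?thesis
      using borel_measurable_emeasure_m_iter[OF D]
      by (simp add: nn_integral_0_iff_AE measurable_cong_sets[OF sets_kernel[OF kernel] refl])
  qed
  then have "AE z in m x. z \<in> N_set m D"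
    unfolding N_set_def by (simp add: AE_all_countable)
  then show ?thesis
    using N_set_borel[OF D] subprob_measurableD(1,2)[OF kernel]
    by (subst (asm) AE_iff_measurable[of "- N_set m D"]) auto
qed

lemma emeasure_le_emeasure_compl_N_set:
  assumes sets_\<nu>: "sets \<nu> = sets borel"
    and invariant: "\<And>A. A \<in> sets borel \<Longrightarrow> emeasure \<nu> A = (\<integral>\<^sup>+ x. emeasure (m x) A \<partial>\<nu>)"
    and D: "D \<in> sets borel"
  shows "emeasure \<nu> D \<le> emeasure \<nu> (- N_set m D)"
proof -
  have "emeasure (m x) D \<le> indicator (- N_set m D) x" for x
  proof (cases "x \<in> N_set m D")
    case True
    then have "emeasure (m_iter m 0 x) D = 0"
      unfolding N_set_def by blast
    then show ?thesis by simp
  next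
    case False
    then show ?thesis
      using subprob_space.subprob_emeasure_le_1[OF subprob_space_kernel[OF kernel]] by simp
  qed
  then have "(\<integral>\<^sup>+ x. emeasure (m x) D \<partial>\<nu>) \<le> (\<integral>\<^sup>+ x. indicator (- N_set m D) x \<partial>\<nu>)"
    by (intro nn_integral_mono) auto
  then show ?thesis
    using N_set_borel[OF D] by (simp add: invariant[OF D] sets_\<nu>)
qed

end

lemma invariant_set_iff_emeasure_compl:
  assumes "mrw_space m"
  shows "invariant_set m B \<longleftrightarrow> B \<in> sets borel \<and> (\<forall>x\<in>B. emeasure (m x) (- B) = 0)"
  using assms emeasure_Compl_eq_0_iff_prob_space[of "m _" B]
  unfolding invariant_set_def mrw_space_def by auto

lemma invariant_set_N_set:
  assumes "mrw_space m" "D \<in> sets borel"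
  shows "invariant_set m (N_set m D)"
  using assms by (simp add: invariant_set_iff_emeasure_compl emeasure_compl_N_set
      N_set_borel mrw_space_kernel)

lemma ergodic_if_m_connected:
  assumes m: "mrw_space m" and \<nu>: "invariant_prob m \<nu>" and connected: "m_connected m \<nu>"
  shows "ergodic m \<nu>"
  unfolding ergodic_def
proof (intro allI impI)
  fix B assume "invariant_set m B"
  then have B: "B \<in> sets borel" and "\<And>x. x \<in> B \<Longrightarrow> emeasure (m x) (- B) = 0"
    using invariant_set_iff_emeasure_compl[OF m] by auto
  then have B_sub: "B \<subseteq> N_set m (- B)"
    using subset_N_set_compl[OF mrw_space_kernel[OF m]] by blast
  have prob: "prob_space \<nu>" and sets_\<nu>: "sets \<nu> = sets borel"
    using \<nu> unfolding invariant_prob_def by auto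
  show "emeasure \<nu> B = 0 \<or> emeasure \<nu> B = 1"
  proof (cases "emeasure \<nu> B < 1")
    case True
    then have "0 < emeasure \<nu> (- B)"
      using emeasure_Compl_prob_space[OF prob sets_\<nu> B] diff_gr0_ennreal by simp
    moreover have "emeasure \<nu> (- B) < \<infinity>"
      using finite_measure.emeasure_finite[OF prob_space.axioms(1)[OF prob]] by (simp add: less_top)
    ultimately have "N_set m (- B) \<in> null_sets \<nu>"
      using connected borel_comp[OF B] unfolding m_connected_def by blast
    then have "B \<in> null_sets \<nu>"
      by (rule null_sets_subset[OF _ _ B_sub]) (simp add: B sets_\<nu>)
    then show ?thesis by (simp add: null_setsD1)
  qed (use prob_space.emeasure_le_1[OF prob, of B] in auto)
qed

lemma m_connected_if_ergodic:
  assumes m: "mrw_space m" and \<nu>: "invariant_prob m \<nu>" and erg: "ergodic m \<nu>"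
  shows "m_connected m \<nu>"
  unfolding m_connected_def
proof (intro ballI impI)
  fix D assume D: "D \<in> sets borel" and "0 < emeasure \<nu> D \<and> emeasure \<nu> D < \<infinity>"
  have prob: "prob_space \<nu>" and sets_\<nu>: "sets \<nu> = sets borel"
    and invariant: "\<And>A. A \<in> sets borel \<Longrightarrow> emeasure \<nu> A = (\<integral>\<^sup>+ x. emeasure (m x) A \<partial>\<nu>)"
    using \<nu> unfolding invariant_prob_def by auto
  have N: "N_set m D \<in> sets borel"
    using N_set_borel[OF mrw_space_kernel[OF m] D] .
  have "0 < emeasure \<nu> (- N_set m D)"
    using emeasure_le_emeasure_compl_N_set[OF mrw_space_kernel[OF m] sets_\<nu> invariant D]
      \<open>0 < emeasure \<nu> D \<and> _\<close> by (auto intro: less_le_trans)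
  then have "emeasure \<nu> (N_set m D) \<noteq> 1"
    using emeasure_Compl_eq_0_iff_prob_space[OF prob sets_\<nu> N] by auto
  then have "emeasure \<nu> (N_set m D) = 0"
    using erg invariant_set_N_set[OF m D] unfolding ergodic_def by blast
  then show "N_set m D \<in> null_sets \<nu>"
    using N sets_\<nu> by (simp add: null_sets_def)
qed

theorem theorem2p19:
  fixes m :: "'a::polish_space \<Rightarrow> 'a measure" and \<nu> :: "'a measure"
  assumes "mrw_space m"
    and "invariant_prob m \<nu>"
  shows "m_connected m \<nu> \<longleftrightarrow> ergodic m \<nu>"
  using ergodic_if_m_connected[OF assms] m_connected_if_ergodic[OF assms] by blast

end
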